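(* Let $N\ge2$ be an integer. Consider, for $\lambda\in\mathbb{R}$, the equation $$-w''+(N-2)w'+(N-1)w=\frac{N-1}{2}e^{-t}w^2+\lambda e^{(N-3)t}\int_0^{e^{-t}}g(s)\,ds \qquad (\ast)$$ and the three problems: (D) $w\in C^2([0,\infty))$ solves $(\ast)$ for $t\ge0$ with $w(0)=0$, $\lim_{t\to\infty}w(t)=0$, where $g\in L^1([0,1])$ and $\lim_{t\to\infty}e^{(N-3)t}\int_0^{e^{-t}}g(s)\,ds=0$; (Nav) $w\in C^2([0,\infty))$ solves $(\ast)$ for $t\ge0$ with $w'(0)-(N-1)w(0)=0$, $\lim_{t\to\infty}w(t)=0$, with $g$ as in (D); (E) $w\in C^2(\mathbb{R})$ solves $(\ast)$ for $t\in\mathbb{R}$ with $\lim_{t\to\pm\infty}w(t)=0$, where $g\in L^1([0,\infty))$ and $\lim_{t\to\pm\infty}e^{(N-3)t}\int_0^{e^{-t}}g(s)\,ds=0$. Assume in each case that $g\ge0$ a.e. and $\operatorname{ess\,sup}g>0$. Then, for each of the problems (D), (Nav), (E), there exists $\lambda_0>0$ such that for every $\lambda>\lambda_0$ the problem has no solution.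
   Context: These are the radial Dirichlet, Navier and entire problems for $\Delta^2u=S_2[u]+\lambda f$ ($S_2$ the sum of $2\times2$ principal minors of the Hessian), obtained via $v=u'$, $w(t)=-v(e^{-t})$. *)

theory Defs
  imports "HOL-Analysis.Analysis" "HOL-Probability.Essential_Supremum"
begin

definition forcing :: "nat \<Rightarrow> (real \<Rightarrow> real) \<Rightarrow> real \<Rightarrow> real" where
  "forcing N g t = exp ((real N - 3) * t) * (LBINT s:{0..exp (- t)}. g s)"

definition C2_with :: "real set \<Rightarrow> (real \<Rightarrow> real) \<Rightarrow> (real \<Rightarrow> real) \<Rightarrow> (real \<Rightarrow> real) \<Rightarrow> bool" where
  "C2_with S w w1 w2 \<longleftrightarrow>
     (\<forall>t\<in>S. (w has_real_derivative w1 t) (at t within S)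
           \<and> (w1 has_real_derivative w2 t) (at t within S))
     \<and> continuous_on S w2"

definition ode_at :: "nat \<Rightarrow> real \<Rightarrow> (real \<Rightarrow> real) \<Rightarrow> (real \<Rightarrow> real) \<Rightarrow> (real \<Rightarrow> real) \<Rightarrow> (real \<Rightarrow> real) \<Rightarrow> real \<Rightarrow> bool" where
  "ode_at N lam g w w1 w2 t \<longleftrightarrow>
     - w2 t + (real N - 2) * w1 t + (real N - 1) * w t
       = (real N - 1) / 2 * exp (- t) * (w t)^2 + lam * forcing N g t"

definition dirichlet_sol :: "nat \<Rightarrow> real \<Rightarrow> (real \<Rightarrow> real) \<Rightarrow> (real \<Rightarrow> real) \<Rightarrow> bool" where
  "dirichlet_sol N lam g w \<longleftrightarrow> (\<exists>w1 w2. C2_with {0..} w w1 w2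
     \<and> (\<forall>t\<ge>0. ode_at N lam g w w1 w2 t)
     \<and> w 0 = 0 \<and> (w \<longlongrightarrow> 0) at_top)"

definition navier_sol :: "nat \<Rightarrow> real \<Rightarrow> (real \<Rightarrow> real) \<Rightarrow> (real \<Rightarrow> real) \<Rightarrow> bool" where
  "navier_sol N lam g w \<longleftrightarrow> (\<exists>w1 w2. C2_with {0..} w w1 w2
     \<and> (\<forall>t\<ge>0. ode_at N lam g w w1 w2 t)
     \<and> w1 0 - (real N - 1) * w 0 = 0 \<and> (w \<longlongrightarrow> 0) at_top)"

definition entire_sol :: "nat \<Rightarrow> real \<Rightarrow> (real \<Rightarrow> real) \<Rightarrow> (real \<Rightarrow> real) \<Rightarrow> bool" where
  "entire_sol N lam g w \<longleftrightarrow> (\<exists>w1 w2. C2_with UNIV w w1 w2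
     \<and> (\<forall>t. ode_at N lam g w w1 w2 t)
     \<and> (w \<longlongrightarrow> 0) at_top \<and> (w \<longlongrightarrow> 0) at_bot)"

definition admissible :: "real set \<Rightarrow> (real \<Rightarrow> real) \<Rightarrow> bool" where
  "admissible A g \<longleftrightarrow> set_integrable lborel A g
     \<and> (AE s in lborel. s \<in> A \<longrightarrow> g s \<ge> 0)
     \<and> esssup (restrict_space lborel A) (\<lambda>s. ereal (g s)) > 0"

end

theory Submission
  imports Defs
begin

text \<open>Since g is nonnegative with positive essential
  supremum, the forcing term F is bounded below by some m > 0 on a suitable [a, b]. Test the
  equation against the bump \<phi>(t) = \<eta>(t)^4, \<eta>(t) = (t - a)(b - t), through
  H = -\<phi> w' + \<phi>' w + (N - 2) \<phi> w, which vanishes at a and b. By the equation, H' is a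
  quadratic in \<eta>^2 w with positive leading coefficient, plus \<lambda> \<phi> F; hence
  H' \<ge> \<lambda> \<phi> m - K with K depending only on N, a, b. As H(b) - H(a) = 0, \<lambda> is bounded.\<close>

lemma increment_ge_of_deriv_ge:
  fixes f f' :: "real \<Rightarrow> real"
  assumes xy: "x \<le> y"
    and deriv: "\<forall>t\<in>{x..y}. (f has_real_derivative f' t) (at t within {x..y})"
    and lower: "\<forall>t\<in>{x..y}. c \<le> f' t"
  shows "c * (y - x) \<le> f y - f x"
proof -
  define g where "g t = f t - c * t" for t
  have dg: "(g has_real_derivative (f' t - c)) (at t within {x..y})" if "t \<in> {x..y}" for t
    unfolding g_def using deriv that by (auto intro!: derivative_eq_intros)
  have "g x \<le> g y"
  proof (rule DERIV_nonneg_imp_increasing_open[OF xy])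
    fix t assume t: "x < t" "t < y"
    then have "at t within {x..y} = at t" by (intro at_within_Icc_at) auto
    then show "\<exists>z. DERIV g t :> z \<and> z \<ge> 0"
      using dg[of t] lower t by (intro exI[of _ "f' t - c"]) auto
  next
    show "continuous_on {x..y} g"
      using dg by (meson DERIV_continuous atLeastAtMost_iff continuous_on_eq_continuous_within)
  qed
  then show ?thesis unfolding g_def by (simp add: algebra_simps)
qed

lemma deriv_ge_on_middle_half_le:
  fixes f f' :: "real \<Rightarrow> real"
  assumes ab: "a < b" and ends: "f a = f b"
    and deriv: "\<forall>t\<in>{a..b}. (f has_real_derivative f' t) (at t within {a..b})"
    and lower: "\<forall>t\<in>{a..b}. - K \<le> f' t"
    and middle: "\<forall>t\<in>{a + (b - a) / 4..b - (b - a) / 4}. M \<le> f' t"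
  shows "M \<le> K"
proof -
  define a' where "a' = a + (b - a) / 4"
  define b' where "b' = b - (b - a) / 4"
  have ord: "a \<le> a'" "a' \<le> b'" "b' \<le> b" using ab by (simp_all add: a'_def b'_def field_simps)
  have deriv_sub: "\<forall>t\<in>{x..y}. (f has_real_derivative f' t) (at t within {x..y})"
    if "a \<le> x" "y \<le> b" for x y
  proof
    fix t assume "t \<in> {x..y}"
    with that have "t \<in> {a..b}" "{x..y} \<subseteq> {a..b}" by auto
    then show "(f has_real_derivative f' t) (at t within {x..y})"
      using deriv has_field_derivative_subset by blast
  qed
  have lens: "a' - a = (b - a) / 4" "b' - a' = (b - a) / 2" "b - b' = (b - a) / 4"
    by (simp_all add: a'_def b'_def field_simps)
  have "- K * (a' - a) \<le> f a' - f a"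
    using ord lower deriv_sub by (intro increment_ge_of_deriv_ge[where f' = f']) auto
  moreover have "M * (b' - a') \<le> f b' - f a'"
    using ord middle deriv_sub by (intro increment_ge_of_deriv_ge[where f' = f']) (auto simp: a'_def b'_def)
  moreover have "- K * (b - b') \<le> f b - f b'"
    using ord lower deriv_sub by (intro increment_ge_of_deriv_ge[where f' = f']) auto
  moreover have "(M - K) * ((b - a) / 2) = - K * ((b - a) / 4) + M * ((b - a) / 2) + - K * ((b - a) / 4)"
    by algebra
  ultimately have "(M - K) * ((b - a) / 2) \<le> 0"
    using ends unfolding lens by linarith
  then show ?thesis using ab by (simp add: mult_le_0_iff)
qed

lemma quadratic_ge_neg_discriminant:
  fixes \<alpha> q x :: real
  assumes "\<alpha> > 0"
  shows "- (q\<^sup>2 / (4 * \<alpha>)) \<le> \<alpha> * x\<^sup>2 + q * x"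
proof -
  have "0 \<le> (2 * \<alpha> * x + q)\<^sup>2" by simp
  also have "(2 * \<alpha> * x + q)\<^sup>2 = 4 * \<alpha> * (\<alpha> * x\<^sup>2 + q * x) + q\<^sup>2" by algebra
  finally show ?thesis using assms by (simp add: field_simps)
qed

definition bump :: "real \<Rightarrow> real \<Rightarrow> real \<Rightarrow> real" where
  "bump a b t = ((t - a) * (b - t)) ^ 4"

definition bump_deriv :: "real \<Rightarrow> real \<Rightarrow> real \<Rightarrow> real" where
  "bump_deriv a b t = 4 * ((t - a) * (b - t)) ^ 3 * (a + b - 2 * t)"

definition bump_deriv2 :: "real \<Rightarrow> real \<Rightarrow> real \<Rightarrow> real" where
  "bump_deriv2 a b t = 12 * ((t - a) * (b - t))\<^sup>2 * (a + b - 2 * t)\<^sup>2 - 8 * ((t - a) * (b - t)) ^ 3"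

lemma has_real_derivative_bump: "(bump a b has_real_derivative bump_deriv a b t) (at t within S)"
  unfolding bump_def bump_deriv_def
  by (rule derivative_eq_intros refl)+ (simp add: algebra_simps)

lemma has_real_derivative_bump_deriv:
  "(bump_deriv a b has_real_derivative bump_deriv2 a b t) (at t within S)"
  unfolding bump_deriv_def bump_deriv2_def
  by (rule derivative_eq_intros refl)+ (simp add: algebra_simps power2_eq_square power3_eq_cube)

lemma bump_nonneg: "t \<in> {a..b} \<Longrightarrow> 0 \<le> bump a b t"
  by (simp add: bump_def)

lemma bump_ge_on_middle_half:
  assumes "t \<in> {a + (b - a) / 4..b - (b - a) / 4}"
  shows "((b - a) / 4) ^ 8 \<le> bump a b t"
proof -
  have "(b - a) / 4 \<le> t - a" "(b - a) / 4 \<le> b - t" "0 \<le> (b - a) / 4"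
    using assms by (simp_all add: field_simps)
  then have "((b - a) / 4)\<^sup>2 \<le> (t - a) * (b - t)"
    unfolding power2_eq_square by (intro mult_mono) auto
  then have "(((b - a) / 4)\<^sup>2) ^ 4 \<le> ((t - a) * (b - t)) ^ 4"
    by (intro power_mono) auto
  then show ?thesis by (simp add: bump_def flip: power_mult)
qed

text \<open>The right-hand side is H' from the header. Eliminating w'' by the equation turns it into
  (N - 1)/2 e^(-t) (\<eta>^2 w)^2 + Q (\<eta>^2 w) + \<lambda> \<phi> F with a polynomial Q, and K bounds the
  discriminant term e^t Q^2 / (2 (N - 1)) on [a, b].\<close>
lemma bump_energy_rate_lower_bound:
  fixes N :: nat and a b :: real
  assumes N: "N \<ge> 2"
  obtains K where "\<And>lam w w1 w2 F t. t \<in> {a..b} \<Longrightarrow>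
      - w2 + (real N - 2) * w1 + (real N - 1) * w = (real N - 1) / 2 * exp (- t) * w\<^sup>2 + lam * F \<Longrightarrow>
      lam * bump a b t * F - K
        \<le> - bump a b t * w2 + bump_deriv2 a b t * w + (real N - 2) * (bump_deriv a b t * w + bump a b t * w1)"
proof -
  define c where "c = (real N - 1) / 2"
  have c: "c > 0" using N by (simp add: c_def)
  define \<eta> where "\<eta> t = (t - a) * (b - t)" for t
  define e where "e t = a + b - 2 * t" for t
  define Q where "Q t = 12 * (e t)\<^sup>2 - 8 * \<eta> t + 4 * (real N - 2) * \<eta> t * e t - (real N - 1) * (\<eta> t)\<^sup>2" for t
  define R where "R t = exp t * (Q t)\<^sup>2 / (4 * c)" for t
  have "continuous_on {a..b} R"
    unfolding R_def Q_def e_def \<eta>_def by (intro continuous_intros) (use c in auto)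
  then have "bounded (R ` {a..b})" by (intro compact_imp_bounded compact_continuous_image) auto
  then obtain K where K: "\<forall>t\<in>{a..b}. \<bar>R t\<bar> \<le> K" by (auto simp: bounded_real)
  show thesis
  proof (rule that)
    fix lam w w1 w2 F t
    assume t: "t \<in> {a..b}"
      and ode: "- w2 + (real N - 2) * w1 + (real N - 1) * w = (real N - 1) / 2 * exp (- t) * w\<^sup>2 + lam * F"
    have w2: "w2 = (real N - 2) * w1 + (real N - 1) * w - c * exp (- t) * w\<^sup>2 - lam * F"
      using ode unfolding c_def by linarith
    have "- bump a b t * w2 + bump_deriv2 a b t * w + (real N - 2) * (bump_deriv a b t * w + bump a b t * w1)
        = c * exp (- t) * ((\<eta> t)\<^sup>2 * w)\<^sup>2 + Q t * ((\<eta> t)\<^sup>2 * w) + lam * bump a b t * F"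
      unfolding w2 bump_def bump_deriv_def bump_deriv2_def Q_def \<eta>_def e_def c_def
      by (simp add: field_simps power2_eq_square power3_eq_cube power4_eq_xxxx)
    moreover have "- R t \<le> c * exp (- t) * ((\<eta> t)\<^sup>2 * w)\<^sup>2 + Q t * ((\<eta> t)\<^sup>2 * w)"
      using quadratic_ge_neg_discriminant[of "c * exp (- t)" "Q t" "(\<eta> t)\<^sup>2 * w"] c
      by (simp add: R_def exp_minus field_simps)
    ultimately show "lam * bump a b t * F - K
        \<le> - bump a b t * w2 + bump_deriv2 a b t * w + (real N - 2) * (bump_deriv a b t * w + bump a b t * w1)"
      using K t by (force dest: abs_le_D1)
  qed
qed

lemma large_forcing_excludes_solutions:
  fixes N :: nat and a b m :: real
  assumes N: "N \<ge> 2" and ab: "a < b" and m: "m > 0"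
  shows "\<exists>L0>0. \<forall>lam>L0. \<forall>w w1 w2 F. \<not> (\<forall>t\<in>{a..b}.
     (w has_real_derivative w1 t) (at t within {a..b}) \<and>
     (w1 has_real_derivative w2 t) (at t within {a..b}) \<and> m \<le> F t \<and>
     - w2 t + (real N - 2) * w1 t + (real N - 1) * w t
       = (real N - 1) / 2 * exp (- t) * (w t)\<^sup>2 + lam * F t)"
proof -
  obtain K where K: "\<And>lam w w1 w2 F t. t \<in> {a..b} \<Longrightarrow>
      - w2 + (real N - 2) * w1 + (real N - 1) * w = (real N - 1) / 2 * exp (- t) * w\<^sup>2 + lam * F \<Longrightarrow>
      lam * bump a b t * F - K
        \<le> - bump a b t * w2 + bump_deriv2 a b t * w + (real N - 2) * (bump_deriv a b t * w + bump a b t * w1)"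
    using bump_energy_rate_lower_bound[OF N] by blast
  define p where "p = ((b - a) / 4) ^ 8"
  have p: "p > 0" using ab by (simp add: p_def)
  define L0 where "L0 = (2 * \<bar>K\<bar> + 1) / (m * p)"
  have L0: "L0 > 0" using m p by (simp add: L0_def)
  show ?thesis
  proof (intro exI[of _ L0] conjI allI impI notI L0)
    fix lam w w1 w2 F
    assume lam: "lam > L0"
    assume sol: "\<forall>t\<in>{a..b}.
     (w has_real_derivative w1 t) (at t within {a..b}) \<and>
     (w1 has_real_derivative w2 t) (at t within {a..b}) \<and> m \<le> F t \<and>
     - w2 t + (real N - 2) * w1 t + (real N - 1) * w t
       = (real N - 1) / 2 * exp (- t) * (w t)\<^sup>2 + lam * F t"
    have F_ge: "m \<le> F t" if "t \<in> {a..b}" for t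
      using sol that by blast
    have lam_pos: "0 \<le> lam" using lam L0 by simp
    define H where
      "H t = - bump a b t * w1 t + bump_deriv a b t * w t + (real N - 2) * (bump a b t * w t)" for t
    define G where
      "G t = - bump a b t * w2 t + bump_deriv2 a b t * w t
         + (real N - 2) * (bump_deriv a b t * w t + bump a b t * w1 t)" for t
    have H_deriv: "\<forall>t\<in>{a..b}. (H has_real_derivative G t) (at t within {a..b})"
    proof
      fix t assume "t \<in> {a..b}"
      then have "(w has_real_derivative w1 t) (at t within {a..b})"
        "(w1 has_real_derivative w2 t) (at t within {a..b})" using sol by auto
      note product_rules = DERIV_mult[OF has_real_derivative_bump[of a b] this(2)]
        DERIV_mult[OF has_real_derivative_bump_deriv[of a b] this(1)]
        DERIV_mult[OF has_real_derivative_bump[of a b] this(1)]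
      show "(H has_real_derivative G t) (at t within {a..b})"
        using DERIV_add[OF DERIV_add[OF DERIV_minus[OF product_rules(1)] product_rules(2)]
            DERIV_cmult[OF product_rules(3), of "real N - 2"]]
        unfolding H_def G_def by (simp add: algebra_simps)
    qed
    have H_ends: "H a = H b" by (simp add: H_def bump_def bump_deriv_def)
    have G_lower: "lam * bump a b t * F t - K \<le> G t" if "t \<in> {a..b}" for t
      using K[of t] sol that unfolding G_def by blast
    have "\<forall>t\<in>{a..b}. - K \<le> G t"
    proof
      fix t assume t: "t \<in> {a..b}"
      have "0 \<le> lam * bump a b t * F t"
        using lam_pos bump_nonneg[OF t] F_ge[OF t] m by simp
      then show "- K \<le> G t" using G_lower[OF t] by linarith
    qed
    moreover have "\<forall>t\<in>{a + (b - a) / 4..b - (b - a) / 4}. lam * p * m - K \<le> G t"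
    proof
      fix t assume t: "t \<in> {a + (b - a) / 4..b - (b - a) / 4}"
      then have t_ab: "t \<in> {a..b}" using ab by (auto simp: field_simps)
      have "p * m \<le> bump a b t * F t"
        by (rule mult_mono)
          (use bump_ge_on_middle_half[OF t] bump_nonneg[OF t_ab] F_ge[OF t_ab] m in \<open>auto simp: p_def\<close>)
      then have "lam * p * m \<le> lam * bump a b t * F t"
        using lam_pos by (simp add: mult_left_mono mult.assoc)
      then show "lam * p * m - K \<le> G t" using G_lower[OF t_ab] by linarith
    qed
    ultimately have "lam * p * m - K \<le> K"
      by (rule deriv_ge_on_middle_half_le[OF ab H_ends H_deriv])
    moreover have "2 * \<bar>K\<bar> + 1 < lam * (m * p)"
      using lam m p unfolding L0_def by (simp add: field_simps)
    ultimately show False by (simp add: algebra_simps)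
  qed
qed

lemma set_integral_Icc_mono_nonneg:
  fixes g :: "real \<Rightarrow> real"
  assumes int: "set_integrable lborel A g" and nonneg: "AE s in lborel. s \<in> A \<longrightarrow> 0 \<le> g s"
    and sub: "{0..y} \<subseteq> A" and xy: "x \<le> y"
  shows "(LBINT s:{0..x}. g s) \<le> (LBINT s:{0..y}. g s)"
  unfolding set_lebesgue_integral_def
proof (rule integral_mono_AE)
  show "integrable lborel (\<lambda>s. indicator {0..x} s *\<^sub>R g s)"
    using set_integrable_subset[OF int _ order_trans[OF _ sub]] xy by (simp add: set_integrable_def)
  show "integrable lborel (\<lambda>s. indicator {0..y} s *\<^sub>R g s)"
    using set_integrable_subset[OF int _ sub] by (simp add: set_integrable_def)
  show "AE s in lborel. indicator {0..x} s *\<^sub>R g s \<le> indicator {0..y} s *\<^sub>R g s"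
    using nonneg by eventually_elim (use sub xy in \<open>auto split: split_indicator\<close>)
qed

lemma forcing_ge:
  fixes g :: "real \<Rightarrow> real"
  assumes int: "set_integrable lborel A g" and nonneg: "AE s in lborel. s \<in> A \<longrightarrow> 0 \<le> g s"
    and sub: "{0..exp (- a)} \<subseteq> A" and t: "t \<in> {a..b}"
    and mass: "0 \<le> (LBINT s:{0..exp (- b)}. g s)"
  shows "exp (- \<bar>real N - 3\<bar> * (\<bar>a\<bar> + \<bar>b\<bar>)) * (LBINT s:{0..exp (- b)}. g s) \<le> forcing N g t"
proof -
  have "(LBINT s:{0..exp (- b)}. g s) \<le> (LBINT s:{0..exp (- t)}. g s)"
    using t order_trans[OF _ sub, of "{0..exp (- t)}"]
    by (intro set_integral_Icc_mono_nonneg[OF int nonneg]) auto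
  moreover have "exp (- \<bar>real N - 3\<bar> * (\<bar>a\<bar> + \<bar>b\<bar>)) \<le> exp ((real N - 3) * t)"
  proof -
    have "\<bar>real N - 3\<bar> * \<bar>t\<bar> \<le> \<bar>real N - 3\<bar> * (\<bar>a\<bar> + \<bar>b\<bar>)"
      using t by (intro mult_left_mono) auto
    moreover have "- (\<bar>real N - 3\<bar> * \<bar>t\<bar>) \<le> (real N - 3) * t"
      by (metis abs_ge_minus_self abs_mult minus_le_iff)
    ultimately show ?thesis by simp
  qed
  ultimately show ?thesis unfolding forcing_def using mass by (intro mult_mono) auto
qed

lemma AE_eq_0_of_set_integral_nonpos:
  fixes g :: "'a \<Rightarrow> real"
  assumes int: "set_integrable M B g" and nonneg: "AE s in M. s \<in> B \<longrightarrow> 0 \<le> g s"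
    and nonpos: "(LINT s:B|M. g s) \<le> 0"
  shows "AE s in M. s \<in> B \<longrightarrow> g s = 0"
proof -
  have nonneg': "AE s in M. 0 \<le> indicator B s *\<^sub>R g s"
    using nonneg by eventually_elim (auto split: split_indicator)
  then have "integral\<^sup>L M (\<lambda>s. indicator B s *\<^sub>R g s) = 0"
    using integral_nonneg_AE[OF nonneg'] nonpos unfolding set_lebesgue_integral_def by linarith
  then have "AE s in M. indicator B s *\<^sub>R g s = 0"
    using integral_nonneg_eq_0_iff_AE[OF _ nonneg'] int by (simp add: set_integrable_def)
  then show ?thesis by eventually_elim (auto split: split_indicator)
qed

lemma esssup_restrict_space_le_0:
  fixes g :: "real \<Rightarrow> real"
  assumes int: "set_integrable lborel A g" and A: "A \<in> sets lborel"
    and nonpos: "AE s in lborel. s \<in> A \<longrightarrow> g s \<le> 0"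
  shows "esssup (restrict_space lborel A) (\<lambda>s. ereal (g s)) \<le> 0"
proof (rule esssup_I)
  have "(\<lambda>s. indicator A s *\<^sub>R g s) \<in> borel_measurable lborel"
    using int by (simp add: set_integrable_def)
  then have "g \<in> borel_measurable (restrict_space lborel A)"
    using A by (subst borel_measurable_restrict_space_iff) auto
  then show "(\<lambda>s. ereal (g s)) \<in> borel_measurable (restrict_space lborel A)"
    by measurable
  show "AE s in restrict_space lborel A. ereal (g s) \<le> 0"
    using nonpos A by (subst AE_restrict_space_iff) auto
qed

lemma ex_pos_initial_integral_of_esssup_pos:
  fixes g :: "real \<Rightarrow> real" and x :: "nat \<Rightarrow> real"
  assumes int: "set_integrable lborel A g" and nonneg: "AE s in lborel. s \<in> A \<longrightarrow> 0 \<le> g s"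
    and pos: "esssup (restrict_space lborel A) (\<lambda>s. ereal (g s)) > 0"
    and A: "A \<in> sets lborel"
    and sub: "\<And>n. {0..x n} \<subseteq> A"
    and exhaust: "AE s in lborel. s \<in> A \<longrightarrow> (\<exists>n. s \<in> {0..x n})"
  shows "\<exists>n. (LBINT s:{0..x n}. g s) > 0"
proof (rule ccontr)
  assume "\<not> ?thesis"
  then have nonpos: "(LBINT s:{0..x n}. g s) \<le> 0" for n by (simp add: not_less)
  have "AE s in lborel. s \<in> {0..x n} \<longrightarrow> g s = 0" for n
  proof (rule AE_eq_0_of_set_integral_nonpos[OF _ _ nonpos])
    show "set_integrable lborel {0..x n} g" using set_integrable_subset[OF int _ sub] by simp
    show "AE s in lborel. s \<in> {0..x n} \<longrightarrow> 0 \<le> g s"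
      using nonneg by eventually_elim (use sub[of n] in auto)
  qed
  then have "AE s in lborel. \<forall>n. s \<in> {0..x n} \<longrightarrow> g s = 0"
    by (subst AE_all_countable) blast
  with exhaust have "AE s in lborel. s \<in> A \<longrightarrow> g s \<le> 0"
    by eventually_elim fastforce
  then show False
    using esssup_restrict_space_le_0[OF int A] pos by simp
qed

lemma large_lam_no_C2_solution:
  fixes g :: "real \<Rightarrow> real" and N :: nat
  assumes N: "N \<ge> 2" and int: "set_integrable lborel A g"
    and nonneg: "AE s in lborel. s \<in> A \<longrightarrow> 0 \<le> g s"
    and ab: "a < b" and sub: "{0..exp (- a)} \<subseteq> A" and mass: "(LBINT s:{0..exp (- b)}. g s) > 0"
    and S: "{a..b} \<subseteq> S"
  shows "\<exists>lam0>0. \<forall>lam>lam0. \<not> (\<exists>w w1 w2. C2_with S w w1 w2 \<and> (\<forall>t\<in>S. ode_at N lam g w w1 w2 t))"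
proof -
  define m where "m = exp (- \<bar>real N - 3\<bar> * (\<bar>a\<bar> + \<bar>b\<bar>)) * (LBINT s:{0..exp (- b)}. g s)"
  have m: "m > 0" using mass by (simp add: m_def)
  have forcing_ge_m: "\<forall>t\<in>{a..b}. m \<le> forcing N g t"
    using forcing_ge[OF int nonneg sub] mass unfolding m_def by auto
  obtain L0 where L0: "L0 > 0" and no_sol: "\<forall>lam>L0. \<forall>w w1 w2 F. \<not> (\<forall>t\<in>{a..b}.
     (w has_real_derivative w1 t) (at t within {a..b}) \<and>
     (w1 has_real_derivative w2 t) (at t within {a..b}) \<and> m \<le> F t \<and>
     - w2 t + (real N - 2) * w1 t + (real N - 1) * w t
       = (real N - 1) / 2 * exp (- t) * (w t)\<^sup>2 + lam * F t)"
    using large_forcing_excludes_solutions[OF N ab m] by blast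
  have "\<not> (\<exists>w w1 w2. C2_with S w w1 w2 \<and> (\<forall>t\<in>S. ode_at N lam g w w1 w2 t))" if lam: "lam > L0" for lam
  proof
    assume "\<exists>w w1 w2. C2_with S w w1 w2 \<and> (\<forall>t\<in>S. ode_at N lam g w w1 w2 t)"
    then obtain w w1 w2 where C2: "C2_with S w w1 w2" and ode: "\<forall>t\<in>S. ode_at N lam g w w1 w2 t"
      by blast
    have "(w has_real_derivative w1 t) (at t within {a..b})"
      "(w1 has_real_derivative w2 t) (at t within {a..b})" if "t \<in> {a..b}" for t
      using C2 S \<open>t \<in> {a..b}\<close> has_field_derivative_subset[OF _ S] unfolding C2_with_def by blast+
    then show False
      using no_sol[rule_format, OF lam, of w w1 w2 "forcing N g"] ode forcing_ge_m S
      unfolding ode_at_def by blast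
  qed
  then show ?thesis using L0 by blast
qed

lemma admissible_unit_interval_positive_mass:
  fixes g :: "real \<Rightarrow> real"
  assumes adm: "admissible {0..1} g"
  shows "\<exists>a b. 0 < a \<and> a < b \<and> {0..exp (- a)} \<subseteq> {0..1} \<and> (LBINT s:{0..exp (- b)}. g s) > 0"
proof -
  define x where "x n = 1 - 1 / (real n + 2)" for n :: nat
  have x: "0 < x n" "x n < 1" for n unfolding x_def by (auto simp: field_simps)
  have exhaust: "AE s in lborel. s \<in> {0..1} \<longrightarrow> (\<exists>n. s \<in> {0..x n})"
    using AE_lborel_singleton[of "1::real"]
  proof eventually_elim
    case (elim s)
    show ?case
    proof
      assume s: "s \<in> {0..1::real}"
      then have "0 < 1 - s" using elim by auto
      then obtain n where n: "n > 0" "inverse (real n) < 1 - s" using ex_inverse_of_nat_less by blast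
      have "1 / (real n + 2) \<le> inverse (real n)" using n by (simp add: field_simps)
      then have "s \<le> x n" using n unfolding x_def by linarith
      then show "\<exists>n. s \<in> {0..x n}" using s by auto
    qed
  qed
  obtain n where n: "(LBINT s:{0..x n}. g s) > 0"
    using ex_pos_initial_integral_of_esssup_pos[of "{0..1}" g x] adm exhaust x unfolding admissible_def
    by (metis atLeastAtMost_iff atLeastatMost_subset_iff less_imp_le order_refl sets_lborel atLeastAtMost_borel)
  define b where "b = - ln (x n)"
  have b: "b > 0" "exp (- b) = x n" using x[of n] by (auto simp: b_def)
  show ?thesis
    using b n by (intro exI[of _ "b/2"] exI[of _ b]) auto
qed

lemma admissible_half_line_positive_mass:
  fixes g :: "real \<Rightarrow> real"
  assumes adm: "admissible {0..} g"
  shows "\<exists>a b. a < b \<and> (LBINT s:{0..exp (- b)}. g s) > 0"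
proof -
  define x where "x n = real n + 1" for n :: nat
  have x: "0 < x n" for n unfolding x_def by auto
  have exhaust: "AE s in lborel. s \<in> {0..} \<longrightarrow> (\<exists>n. s \<in> {0..x n})"
  proof (rule AE_I2, rule impI)
    fix s :: real assume "s \<in> {0..}"
    moreover obtain n where "s \<le> real n" using real_arch_simple by blast
    ultimately show "\<exists>n. s \<in> {0..x n}" unfolding x_def by (intro exI[of _ n]) auto
  qed
  obtain n where n: "(LBINT s:{0..x n}. g s) > 0"
    using ex_pos_initial_integral_of_esssup_pos[of "{0..}" g x] adm exhaust x unfolding admissible_def by auto
  define b where "b = - ln (x n)"
  have b: "exp (- b) = x n" using x[of n] by (auto simp: b_def)
  show ?thesis
    using b n by (intro exI[of _ "b - 1"] exI[of _ b]) auto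
qed

lemma large_lam_no_C2_solution_half_line:
  fixes g :: "real \<Rightarrow> real" and N :: nat
  assumes N: "N \<ge> 2" and adm: "admissible {0..1} g"
  shows "\<exists>lam0>0. \<forall>lam>lam0.
    \<not> (\<exists>w w1 w2. C2_with {0..} w w1 w2 \<and> (\<forall>t\<in>{0..}. ode_at N lam g w w1 w2 t))"
proof -
  obtain a b where "0 < a" "a < b" "{0..exp (- a)} \<subseteq> {0..1}" "(LBINT s:{0..exp (- b)}. g s) > 0"
    using admissible_unit_interval_positive_mass[OF adm] by blast
  then show ?thesis
    using adm unfolding admissible_def by (intro large_lam_no_C2_solution[OF N, of "{0..1}"]) auto
qed

lemma large_lam_no_C2_solution_line:
  fixes g :: "real \<Rightarrow> real" and N :: nat
  assumes N: "N \<ge> 2" and adm: "admissible {0..} g"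
  shows "\<exists>lam0>0. \<forall>lam>lam0.
    \<not> (\<exists>w w1 w2. C2_with UNIV w w1 w2 \<and> (\<forall>t\<in>UNIV. ode_at N lam g w w1 w2 t))"
proof -
  obtain a b where "a < b" "(LBINT s:{0..exp (- b)}. g s) > 0"
    using admissible_half_line_positive_mass[OF adm] by blast
  then show ?thesis
    using adm unfolding admissible_def by (intro large_lam_no_C2_solution[OF N, of "{0..}"]) auto
qed

theorem theorem4p14:
  fixes N :: nat
  assumes "N \<ge> 2"
  shows
   "(\<forall>g. admissible {0..1} g \<and> ((\<lambda>t. forcing N g t) \<longlongrightarrow> 0) at_top \<longrightarrow>
       (\<exists>lam0>0. \<forall>lam>lam0. \<not> (\<exists>w. dirichlet_sol N lam g w)))
  \<and> (\<forall>g. admissible {0..1} g \<and> ((\<lambda>t. forcing N g t) \<longlongrightarrow> 0) at_top \<longrightarrow>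
       (\<exists>lam0>0. \<forall>lam>lam0. \<not> (\<exists>w. navier_sol N lam g w)))
  \<and> (\<forall>g. admissible {0..} g \<and> ((\<lambda>t. forcing N g t) \<longlongrightarrow> 0) at_top
          \<and> ((\<lambda>t. forcing N g t) \<longlongrightarrow> 0) at_bot \<longrightarrow>
       (\<exists>lam0>0. \<forall>lam>lam0. \<not> (\<exists>w. entire_sol N lam g w)))"
proof (intro conjI allI impI)
  fix g assume "admissible {0..1} g \<and> ((\<lambda>t. forcing N g t) \<longlongrightarrow> 0) at_top"
  then obtain lam0 where "lam0 > 0" and no_sol: "\<forall>lam>lam0.
      \<not> (\<exists>w w1 w2. C2_with {0..} w w1 w2 \<and> (\<forall>t\<in>{0..}. ode_at N lam g w w1 w2 t))"
    using large_lam_no_C2_solution_half_line[OF assms] by blast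
  then show "\<exists>lam0>0. \<forall>lam>lam0. \<not> (\<exists>w. dirichlet_sol N lam g w)"
    unfolding dirichlet_sol_def by fastforce
  show "\<exists>lam0>0. \<forall>lam>lam0. \<not> (\<exists>w. navier_sol N lam g w)"
    using \<open>lam0 > 0\<close> no_sol unfolding navier_sol_def by fastforce
next
  fix g assume "admissible {0..} g \<and> ((\<lambda>t. forcing N g t) \<longlongrightarrow> 0) at_top
          \<and> ((\<lambda>t. forcing N g t) \<longlongrightarrow> 0) at_bot"
  then show "\<exists>lam0>0. \<forall>lam>lam0. \<not> (\<exists>w. entire_sol N lam g w)"
    using large_lam_no_C2_solution_line[OF assms] unfolding entire_sol_def by fastforce
qed

end
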